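(* Let $D$ be a decorated tangle diagram and let $e$ and $f$ be two oriented edges lying on the same strand of $D$, with orientations compatible along that strand. Then the endomorphisms of $C(D)$ given by multiplication by $x_e$ and by $x_f$ are $1$-homotopic.
   Context: Conventions. All rings and modules are bigraded by an internal grading and a filtration grading; rings are concentrated in nonpositive even internal degree and filtration degree $0$. For a module $M$, $M\{i,j\}$ is $M$ with gradings shifted so that an element of bidegree $(a,b)$ in $M$ has bidegree $(a+i,b+j)$, and $M\{i\}=M\{i,0\}$; the internal grading is used for Koszul signs (a shift by an odd internal amount negates the differential). For a ring $R$ and homogeneous $w\in R$ of bidegree $(2k_0,0)$ with $k_0$ odd (here $k_0=-3$), a multifactorization of $w$ is an $R$-module $C$ with $R$-linear maps $d_i:C\to C$ ($i\ge0$) of bidegree $(k_0,i)$ such that $D=\sum_id_i$ satisfies $D^2=w$. A chain map is $F=\sum_{i\ge0}f_i$ with $f_i$ of bidegree $(0,i)$ and $FD=D'F$. An $n$-homotopy between chain maps $F,G$ is $H=\sum_{i\ge-n}h_i$ with $h_i$ of bidegree $(-k_0,i)$ and $F-G=HD+D'H$. For homogeneous $a,b\in R$ of bidegrees $(2i,0),(2j,0)$, the Koszul factorization $K(a,b)$ is $R\{i-j\}e\oplus Rf$ with $d(e)=af$, $d(f)=be$; tensor products are over $R$ with differential $d\otimes1+1\otimes d$ and Koszul signs. Decorated diagrams. A decorated diagram $D$ of a tangle consists of a tangle diagram $D^\circ$ in a disc together with finitely many disjoint dotted arcs meeting $D^\circ$ only in their endpoints such that $D^\circ\cup(\text{arcs})$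 is connected; a labeling of each region of the complement of $D^\circ\cup(\text{arcs})$ by a distinct variable $x_1,\dots,x_m$ of bidegree $(-2,0)$; and a marked adjacent edge near each crossing and arc (only affecting signs). $R(D)\subset\mathbb Z[x_1,\dots,x_m]$ is generated by all differences $x_i-x_j$; for an oriented edge $e$, $x_e=x_\ell-x_r$ ($x_\ell,x_r$ the labels of regions to its left and right). Each crossing and each dotted arc lies in a small disc meeting the diagram in four points, with boundary-touching regions labeled $x_0,x_1,x_2,x_3$ in cyclic order; $c=x_1-x_2+x_3-x_0$. $D_0$: two strands cutting off $x_1$ and $x_3$, joined by a dotted arc separating $x_0$ from $x_2$; $D_1$: strands cutting off $x_0$ and $x_2$, arc separating $x_1$ from $x_3$. $C(D_0)=K(x_0-x_2,(x_1-x_3)c)$ (generators $e,f$), $C(D_1)=K(x_1-x_3,(x_0-x_2)c)$ (generators $e',f'$). Saddle maps: $s_{0\to1}:C(D_0)\to C(D_1)\{1\}$, $e\mapsto-f'$, $f\mapsto ce'$; $s_{1\to0}:C(D_1)\to C(D_0)\{1\}$, $e'\mapsto-f$, $f'\mapsto ce$. A crossing, labeled so that $D_0$ is its oriented resolution, gets: if positive, $C(D_0)\{1\}\oplus C(D_1)\{-1,1\}$ with $d_1=s_{0\to1}$ from first to second summand and $d_i=0$ for $i\ge2$; if negative, $C(D_1)\{1\}\oplus C(D_0)\{-1,1\}$ with $d_1=s_{1\to0}$. A dotted arc contributes $C(D_0)$. $C(D)=\bigotimes_{R(D)}(C(D_e)\otimes_{R(D_e)}R(D))$ over these elementary pieces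 $D_e$, a multifactorization of $\frac13\sum_{e\in\partial D}x_e^3$ (edges meeting the boundary, oriented inward). *)

theory Defs
  imports "HOL-Library.Poly_Mapping"
begin

type_synonym mpoly = "(nat \<Rightarrow>\<^sub>0 nat) \<Rightarrow>\<^sub>0 int"

definition Var :: "nat \<Rightarrow> mpoly" where
  "Var i = Poly_Mapping.single (Poly_Mapping.single i 1) 1"

text \<open>p is homogeneous of internal degree k (each variable has internal degree -2,
  filtration degree 0).  The zero polynomial has every degree.\<close>
definition hom_deg :: "int \<Rightarrow> mpoly \<Rightarrow> bool" where
  "hom_deg k p \<longleftrightarrow>
     (\<forall>mono\<in>Poly_Mapping.keys p. -2 * int (\<Sum>i\<in>Poly_Mapping.keys mono. Poly_Mapping.lookup mono i) = k)"

inductive_set diff_ring :: "nat \<Rightarrow> mpoly set" for m :: nat where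
  one:  "1 \<in> diff_ring m"
| diff: "i < m \<Longrightarrow> j < m \<Longrightarrow> Var i - Var j \<in> diff_ring m"
| add:  "p \<in> diff_ring m \<Longrightarrow> q \<in> diff_ring m \<Longrightarrow> p + q \<in> diff_ring m"
| neg:  "p \<in> diff_ring m \<Longrightarrow> - p \<in> diff_ring m"
| mult: "p \<in> diff_ring m \<Longrightarrow> q \<in> diff_ring m \<Longrightarrow> p * q \<in> diff_ring m"

text \<open>An elementary piece (crossing or dotted arc) sits in a small disc; the regions touching
  the boundary of that disc are labelled (by region/variable indices) r0,r1,r2,r3 in cyclic
  order.  Port k (k < 4) is the point where the diagram meets the small disc between the
  regions r_k and r_(k+1 mod 4).  For a crossing the labelling is such that D_0 (strands
  joining ports 0-1 and 2-3, cutting off r1 and r3) is the oriented resolution.\<close>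

datatype kind = PosX | NegX | Arc

datatype piece = Piece kind nat nat nat nat

fun pkind :: "piece \<Rightarrow> kind" where
  "pkind (Piece t _ _ _ _) = t"

fun preg :: "piece \<Rightarrow> nat \<Rightarrow> nat" where
  "preg (Piece _ a b c d) k = [a, b, c, d] ! (k mod 4)"

text \<open>Strand partner of a port inside a piece: at a crossing strands go straight through
  (0-2, 1-3); at a dotted arc (picture D_0) the strands join ports 0-1 and 2-3.\<close>
definition partner :: "kind \<Rightarrow> nat \<Rightarrow> nat" where
  "partner t k = (if t = Arc then [1, 0, 3, 2] ! (k mod 4) else (k + 2) mod 4)"

datatype endpt = Bdry | Port nat nat

text \<open>A diagram: number of regions (region i carries the variable x_i), the list of
  elementary pieces, and the set of oriented edges of the tangle diagram with their
  endpoints (a port of a piece, or the boundary of the big disc) and the regions on their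
  left and right.\<close>
record 'e diagram =
  nreg   :: nat
  pieces :: "piece list"
  edges  :: "'e set"
  src    :: "'e \<Rightarrow> endpt"
  tgt    :: "'e \<Rightarrow> endpt"
  lft    :: "'e \<Rightarrow> nat"
  rgt    :: "'e \<Rightarrow> nat"

definition valid_endpt :: "'e diagram \<Rightarrow> endpt \<Rightarrow> bool" where
  "valid_endpt D x \<longleftrightarrow> (case x of Bdry \<Rightarrow> True | Port p k \<Rightarrow> p < length (pieces D) \<and> k < 4)"

definition is_in :: "'e diagram \<Rightarrow> nat \<Rightarrow> nat \<Rightarrow> bool" where
  "is_in D p k \<longleftrightarrow> (\<exists>e\<in>edges D. tgt D e = Port p k)"

definition wf_diagram :: "'e diagram \<Rightarrow> bool" where
  "wf_diagram D \<longleftrightarrow>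
     finite (edges D)
   \<and> (\<forall>p < length (pieces D). \<forall>k < 4. preg (pieces D ! p) k < nreg D)
   \<and> (\<forall>e\<in>edges D. lft D e < nreg D \<and> rgt D e < nreg D
        \<and> valid_endpt D (src D e) \<and> valid_endpt D (tgt D e))
   \<comment> \<open>every port of every piece is the end of exactly one edge-end\<close>
   \<and> (\<forall>p < length (pieces D). \<forall>k < 4.
        card {e\<in>edges D. tgt D e = Port p k} + card {e\<in>edges D. src D e = Port p k} = 1)
   \<comment> \<open>regions adjacent to an edge agree with the regions adjacent to the port\<close>
   \<and> (\<forall>e\<in>edges D. \<forall>p k. tgt D e = Port p k \<longrightarrow>
        lft D e = preg (pieces D ! p) k \<and> rgt D e = preg (pieces D ! p) (Suc k))
   \<and> (\<forall>e\<in>edges D. \<forall>p k. src D e = Port p k \<longrightarrow>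
        lft D e = preg (pieces D ! p) (Suc k) \<and> rgt D e = preg (pieces D ! p) k)
   \<comment> \<open>orientations are consistent along strands through each piece\<close>
   \<and> (\<forall>p < length (pieces D). \<forall>k < 4.
        is_in D p k \<longleftrightarrow> \<not> is_in D p (partner (pkind (pieces D ! p)) k))
   \<comment> \<open>at a crossing, D_0 (joining ports 0-1 and 2-3) is the oriented resolution\<close>
   \<and> (\<forall>p < length (pieces D). pkind (pieces D ! p) \<noteq> Arc \<longrightarrow>
        (is_in D p 0 \<longleftrightarrow> \<not> is_in D p 1))"

definition next_edge :: "'e diagram \<Rightarrow> 'e \<Rightarrow> 'e \<Rightarrow> bool" where
  "next_edge D e f \<longleftrightarrow> e \<in> edges D \<and> f \<in> edges D \<and>
     (\<exists>p k. p < length (pieces D) \<and> k < 4 \<and> tgt D e = Port p k \<and>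
        src D f = Port p (partner (pkind (pieces D ! p)) k))"

definition same_strand :: "'e diagram \<Rightarrow> 'e \<Rightarrow> 'e \<Rightarrow> bool" where
  "same_strand D e f \<longleftrightarrow> (sup (next_edge D) (next_edge D)\<inverse>\<inverse>)\<^sup>*\<^sup>* e f"

definition x_edge :: "'e diagram \<Rightarrow> 'e \<Rightarrow> mpoly" where
  "x_edge D e = Var (lft D e) - Var (rgt D e)"

text \<open>Arc: C(D_0) = K(x0-x2,(x1-x3)c) with basis 0 = e, 1 = f.
  Positive crossing: C(D_0){1} + C(D_1){-1,1} with basis 0 = e, 1 = f, 2 = e', 3 = f'.
  Negative crossing: C(D_1){1} + C(D_0){-1,1} with basis 0 = e', 1 = f', 2 = e, 3 = f.\<close>

definition lsize :: "kind \<Rightarrow> nat" where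
  "lsize t = (if t = Arc then 2 else 4)"

definition lideg :: "kind \<Rightarrow> nat \<Rightarrow> int" where
  "lideg t i = (if t = Arc then [1, 0] ! i else [2, 1, 0, -1] ! i)"

definition lfilt :: "kind \<Rightarrow> nat \<Rightarrow> int" where
  "lfilt t i = (if t = Arc then 0 else [0, 0, 1, 1] ! i)"

text \<open>Local differential D = d_0 + d_1 as a matrix: ld pc i j is the coefficient of basis
  element i in D(basis element j).  Odd internal shifts negate the Koszul differentials.\<close>
definition ld :: "piece \<Rightarrow> nat \<Rightarrow> nat \<Rightarrow> mpoly" where
  "ld pc i j =
     (let V = (\<lambda>k. Var (preg pc k));
          c = V 1 - V 2 + V 3 - V 0;
          a0 = V 0 - V 2; a1 = V 1 - V 3 in
      case pkind pc of
        Arc \<Rightarrow> (if (i, j) = (1, 0) then a0 else if (i, j) = (0, 1) then a1 * c else 0)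
      | PosX \<Rightarrow>
          (if (i, j) = (1, 0) then - a0 else if (i, j) = (0, 1) then - (a1 * c)
           else if (i, j) = (3, 2) then - a1 else if (i, j) = (2, 3) then - (a0 * c)
           else if (i, j) = (3, 0) then -1 else if (i, j) = (2, 1) then c else 0)
      | NegX \<Rightarrow>
          (if (i, j) = (1, 0) then - a1 else if (i, j) = (0, 1) then - (a0 * c)
           else if (i, j) = (3, 2) then - a0 else if (i, j) = (2, 3) then - (a1 * c)
           else if (i, j) = (3, 0) then -1 else if (i, j) = (2, 1) then c else 0))"

definition cbasis :: "'e diagram \<Rightarrow> (nat \<Rightarrow> nat) set" where
  "cbasis D = {b. (\<forall>p < length (pieces D). b p < lsize (pkind (pieces D ! p)))
                 \<and> (\<forall>p \<ge> length (pieces D). b p = 0)}"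

definition ideg :: "'e diagram \<Rightarrow> (nat \<Rightarrow> nat) \<Rightarrow> int" where
  "ideg D b = (\<Sum>p<length (pieces D). lideg (pkind (pieces D ! p)) (b p))"

definition filt :: "'e diagram \<Rightarrow> (nat \<Rightarrow> nat) \<Rightarrow> int" where
  "filt D b = (\<Sum>p<length (pieces D). lfilt (pkind (pieces D ! p)) (b p))"

definition ksign :: "'e diagram \<Rightarrow> (nat \<Rightarrow> nat) \<Rightarrow> nat \<Rightarrow> mpoly" where
  "ksign D b p = (if even (\<Sum>q<p. lideg (pkind (pieces D ! q)) (b q)) then 1 else -1)"

text \<open>Matrix of the total differential of C(D): coefficient of b' in D(b).\<close>
definition dmat :: "'e diagram \<Rightarrow> (nat \<Rightarrow> nat) \<Rightarrow> (nat \<Rightarrow> nat) \<Rightarrow> mpoly" where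
  "dmat D b' b = (\<Sum>p<length (pieces D).
      if (\<forall>q. q \<noteq> p \<longrightarrow> b' q = b q) then ksign D b p * ld (pieces D ! p) (b' p) (b p) else 0)"

text \<open>Two R(D)-linear endomorphisms of C(D) given by matrices F, G (entries: coefficient of
  b' in F(b)) are n-homotopic: there is an R(D)-linear H = sum of h_i (i >= -n) where, for maps
  of internal degree deg (as maps C(D) -> C(D)), h_i has internal degree deg + 3 and filtration
  degree i, with F - G = H D + D H.\<close>
definition homotopic :: "nat \<Rightarrow> int \<Rightarrow> 'e diagram \<Rightarrow>
    ((nat \<Rightarrow> nat) \<Rightarrow> (nat \<Rightarrow> nat) \<Rightarrow> mpoly) \<Rightarrow> ((nat \<Rightarrow> nat) \<Rightarrow> (nat \<Rightarrow> nat) \<Rightarrow> mpoly) \<Rightarrow> bool" where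
  "homotopic n deg D F G \<longleftrightarrow>
     (\<exists>H. (\<forall>b'\<in>cbasis D. \<forall>b\<in>cbasis D.
             H b' b \<in> diff_ring (nreg D)
           \<and> hom_deg (ideg D b + deg + 3 - ideg D b') (H b' b)
           \<and> (H b' b \<noteq> 0 \<longrightarrow> filt D b' \<ge> filt D b - int n))
        \<and> (\<forall>b'\<in>cbasis D. \<forall>b\<in>cbasis D.
             F b' b - G b' b =
               (\<Sum>b''\<in>cbasis D. H b' b'' * dmat D b'' b + dmat D b' b'' * H b'' b)))"

definition mult_mat :: "mpoly \<Rightarrow> (nat \<Rightarrow> nat) \<Rightarrow> (nat \<Rightarrow> nat) \<Rightarrow> mpoly" where
  "mult_mat r b' b = (if b' = b then r else 0)"

end

theory Submission
  imports Defs
begin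

text \<open>Passing through one elementary piece along a strand changes x_e by plus or minus an element
  s of R(D): x_0 - x_2 at a dotted arc and c at a crossing.  On the tensor factor of that piece,
  multiplication by s is null-homotopic via an odd homotopy of filtration degree -1.  Extended to
  C(D) with Koszul signs, its cross terms with the differentials of the other factors cancel, since
  all these local maps are odd.  Hence multiplication by x_e and by the next edge x_f along the
  strand are 1-homotopic, and the lemma follows by transitivity.\<close>

lemma diff_ring_zero: "0 \<in> diff_ring m"
  using diff_ring.add[OF diff_ring.one diff_ring.neg[OF diff_ring.one]] by simp

lemma hom_deg_zero: "hom_deg k 0"
  by (simp add: hom_deg_def)

lemma hom_deg_uminus: "hom_deg k a \<Longrightarrow> hom_deg k (- a)"
  by (simp add: hom_deg_def)

lemma hom_deg_add: "hom_deg k a \<Longrightarrow> hom_deg k b \<Longrightarrow> hom_deg k (a + b)"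
  unfolding hom_deg_def using keys_add[of a b] by blast

lemma hom_deg_diff: "hom_deg k a \<Longrightarrow> hom_deg k b \<Longrightarrow> hom_deg k (a - b)"
  unfolding hom_deg_def using keys_diff[of a b] by blast

lemma hom_deg_one: "hom_deg 0 1"
  by (simp add: hom_deg_def)

lemma hom_deg_Var: "hom_deg (-2) (Var i)"
  by (simp add: hom_deg_def Var_def)

text \<open>The difference x_e - x_f for consecutive edges e, f of a strand through a piece (up to sign).\<close>
definition piece_shift :: "piece \<Rightarrow> mpoly" where
  "piece_shift pc = (let V = (\<lambda>k. Var (preg pc k)) in
     case pkind pc of Arc \<Rightarrow> V 0 - V 2 | _ \<Rightarrow> V 1 - V 2 + V 3 - V 0)"

text \<open>On an arc this maps f to e; at a crossing it is minus the saddle map going back from the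
  second summand to the first.\<close>
definition local_htpy :: "piece \<Rightarrow> nat \<Rightarrow> nat \<Rightarrow> mpoly" where
  "local_htpy pc i j = (let V = (\<lambda>k. Var (preg pc k)) in
     case pkind pc of Arc \<Rightarrow> (if (i, j) = (0, 1) then 1 else 0)
     | _ \<Rightarrow> (if (i, j) = (1, 2) then 1 else if (i, j) = (0, 3) then - (V 1 - V 2 + V 3 - V 0) else 0))"

lemma local_htpy_boundary:
  assumes "i < lsize (pkind pc)" "k < lsize (pkind pc)"
  shows "(\<Sum>j<lsize (pkind pc). local_htpy pc i j * ld pc j k + ld pc i j * local_htpy pc j k)
          = (if i = k then piece_shift pc else 0)"
proof -
  obtain t a b c d where pc: "pc = Piece t a b c d" by (cases pc)
  have sum4: "(\<Sum>j<4. g j) = g 0 + g 1 + g 2 + g 3" and sum2: "(\<Sum>j<2. g j) = g 0 + g 1"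
    for g :: "nat \<Rightarrow> mpoly" by (simp_all add: numeral_eq_Suc lessThan_Suc ac_simps)
  have "i < 4" "k < 4" using assms by (auto simp: lsize_def split: if_splits)
  then have "i \<in> {0, 1, 2, 3}" "k \<in> {0, 1, 2, 3}" by auto
  with assms show ?thesis unfolding pc
    by (cases t; simp add: lsize_def sum4 sum2; elim disjE; simp add: local_htpy_def ld_def piece_shift_def algebra_simps)
qed

lemma ld_nonzero_imp_odd: "ld pc i j \<noteq> 0 \<Longrightarrow> odd (lideg (pkind pc) i - lideg (pkind pc) j)"
  by (cases "pkind pc") (auto simp: ld_def lideg_def Let_def split: if_splits)

lemma local_htpy_nonzero_imp_odd:
  "local_htpy pc i j \<noteq> 0 \<Longrightarrow> odd (lideg (pkind pc) i - lideg (pkind pc) j)"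
  by (cases "pkind pc") (auto simp: local_htpy_def lideg_def Let_def split: if_splits)

lemma local_htpy_in_diff_ring:
  assumes "\<And>k. preg pc k < m"
  shows "local_htpy pc i j \<in> diff_ring m"
proof -
  let ?V = "\<lambda>k. Var (preg pc k)"
  have "- ((?V 1 - ?V 2) + (?V 3 - ?V 0)) \<in> diff_ring m"
    using assms by (intro diff_ring.neg diff_ring.add diff_ring.diff)
  moreover have "local_htpy pc i j \<in> {0, 1, - ((?V 1 - ?V 2) + (?V 3 - ?V 0))}"
    by (cases "pkind pc") (auto simp: local_htpy_def Let_def algebra_simps)
  ultimately show ?thesis using diff_ring_zero diff_ring.one by auto
qed

lemma local_htpy_hom_deg:
  "hom_deg (lideg (pkind pc) j + 1 - lideg (pkind pc) i) (local_htpy pc i j)"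
  by (cases "pkind pc")
     (auto simp: local_htpy_def Let_def lideg_def hom_deg_zero split: if_splits
           intro!: hom_deg_one hom_deg_uminus hom_deg_add hom_deg_diff hom_deg_Var)

lemma local_htpy_filt:
  "local_htpy pc i j \<noteq> 0 \<Longrightarrow> lfilt (pkind pc) i \<ge> lfilt (pkind pc) j - 1"
  by (cases "pkind pc") (auto simp: local_htpy_def Let_def lfilt_def split: if_splits)

lemma preg_bound: "wf_diagram D \<Longrightarrow> p < length (pieces D) \<Longrightarrow> preg (pieces D ! p) k < nreg D"
proof -
  have "preg pc k = preg pc (k mod 4)" for pc by (cases pc) simp
  then show "wf_diagram D \<Longrightarrow> p < length (pieces D) \<Longrightarrow> preg (pieces D ! p) k < nreg D"
    unfolding wf_diagram_def by auto
qed

lemma sum_lessThan_fun_upd: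
  fixes g :: "nat \<Rightarrow> nat \<Rightarrow> int"
  shows "(\<Sum>r<n. g r ((b(q := v)) r)) = (\<Sum>r<n. g r (b r)) + (if q < n then g q v - g q (b q) else 0)"
proof (cases "q < n")
  case True
  have "(\<Sum>r<n. g r ((b(q := v)) r)) = g q v + (\<Sum>r\<in>{..<n}-{q}. g r (b r))"
    using True by (subst sum.remove[of _ q]) (auto intro!: sum.cong)
  moreover have "(\<Sum>r<n. g r (b r)) = g q (b q) + (\<Sum>r\<in>{..<n}-{q}. g r (b r))"
    using True by (subst sum.remove[of _ q]) auto
  ultimately show ?thesis using True by simp
qed (auto intro!: sum.cong)

lemma ksign_fun_upd:
  "ksign D (b(q := v)) p =
    (if q < p \<and> odd (lideg (pkind (pieces D ! q)) v - lideg (pkind (pieces D ! q)) (b q))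
     then - ksign D b p else ksign D b p)"
  using sum_lessThan_fun_upd[of "\<lambda>r. lideg (pkind (pieces D ! r))" b q v p]
  by (auto simp: ksign_def)

lemma ksign_mult_self: "ksign D b p * ksign D b p = 1"
  by (simp add: ksign_def)

lemma ideg_fun_upd: "p < length (pieces D) \<Longrightarrow>
   ideg D (b(p := v)) = ideg D b + lideg (pkind (pieces D ! p)) v - lideg (pkind (pieces D ! p)) (b p)"
  using sum_lessThan_fun_upd[of "\<lambda>r. lideg (pkind (pieces D ! r))" b p v "length (pieces D)"]
  by (simp add: ideg_def)

lemma filt_fun_upd: "p < length (pieces D) \<Longrightarrow>
   filt D (b(p := v)) = filt D b + lfilt (pkind (pieces D ! p)) v - lfilt (pkind (pieces D ! p)) (b p)"
  using sum_lessThan_fun_upd[of "\<lambda>r. lfilt (pkind (pieces D ! r))" b p v "length (pieces D)"]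
  by (simp add: filt_def)

lemma finite_cbasis: "finite (cbasis D)"
proof (rule finite_subset)
  show "cbasis D \<subseteq> {b. \<forall>p. (p \<in> {..<length (pieces D)} \<longrightarrow> b p \<in> {..<4})
                           \<and> (p \<notin> {..<length (pieces D)} \<longrightarrow> b p = 0)}"
    by (auto simp: cbasis_def lsize_def not_less split: if_splits)
qed (intro finite_set_of_finite_funs; simp)

lemma cbasis_fun_upd:
  "b \<in> cbasis D \<Longrightarrow> p < length (pieces D) \<Longrightarrow> v < lsize (pkind (pieces D ! p)) \<Longrightarrow> b(p := v) \<in> cbasis D"
  by (auto simp: cbasis_def)

lemma cbasis_bound: "b \<in> cbasis D \<Longrightarrow> p < length (pieces D) \<Longrightarrow> b p < lsize (pkind (pieces D ! p))"
  by (auto simp: cbasis_def)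

definition factor_map :: "'e diagram \<Rightarrow> nat \<Rightarrow> (nat \<Rightarrow> nat \<Rightarrow> mpoly) \<Rightarrow> (nat \<Rightarrow> nat) \<Rightarrow> (nat \<Rightarrow> nat) \<Rightarrow> mpoly"
  where "factor_map D p M b' b =
    (if \<forall>r. r \<noteq> p \<longrightarrow> b' r = b r then ksign D b p * M (b' p) (b p) else 0)"

lemma factor_map_agree:
  "\<forall>r. r \<noteq> p \<longrightarrow> b' r = b r \<Longrightarrow> factor_map D p M b' b = ksign D b p * M (b' p) (b p)"
  by (simp add: factor_map_def)

lemma factor_map_eq_0:
  "M (b' p) (b p) = 0 \<or> \<not> (\<forall>r. r \<noteq> p \<longrightarrow> b' r = b r) \<Longrightarrow> factor_map D p M b' b = 0"
  by (auto simp: factor_map_def)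

lemma dmat_eq_sum_factor_map: "dmat D b' b = (\<Sum>q<length (pieces D). factor_map D q (ld (pieces D ! q)) b' b)"
  unfolding dmat_def factor_map_def ..

lemma sum_factor_map_comp:
  assumes p: "p < length (pieces D)" and b: "b \<in> cbasis D" and b': "b' \<in> cbasis D"
  shows "(\<Sum>x\<in>cbasis D. factor_map D p M b' x * factor_map D p N x b) =
    (if \<forall>r. r \<noteq> p \<longrightarrow> b' r = b r then (\<Sum>j<lsize (pkind (pieces D ! p)). M (b' p) j * N j (b p)) else 0)"
proof (cases "\<forall>r. r \<noteq> p \<longrightarrow> b' r = b r")
  case False
  then show ?thesis by (auto simp: factor_map_def intro!: sum.neutral)
next
  case True
  let ?F = "\<lambda>x. factor_map D p M b' x * factor_map D p N x b"
  let ?T = "(\<lambda>j. b(p := j)) ` {..<lsize (pkind (pieces D ! p))}"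
  have T: "?T \<subseteq> cbasis D" using b p by (auto intro: cbasis_fun_upd)
  have "(\<Sum>x\<in>cbasis D. ?F x) = (\<Sum>x\<in>?T. ?F x)"
  proof (rule sum.mono_neutral_right[OF finite_cbasis T], intro ballI)
    fix x assume x: "x \<in> cbasis D - ?T"
    have "\<not> (\<forall>r. r \<noteq> p \<longrightarrow> x r = b r)"
    proof
      assume "\<forall>r. r \<noteq> p \<longrightarrow> x r = b r"
      then have "x = b(p := x p)" by (auto simp: fun_eq_iff)
      with x cbasis_bound[of x D p] p show False by auto
    qed
    then show "?F x = 0" by (auto simp: factor_map_def)
  qed
  also have "\<dots> = (\<Sum>j<lsize (pkind (pieces D ! p)). ?F (b(p := j)))"
    by (rule sum.reindex_cong[where l="\<lambda>j. b(p := j)"]) (auto simp: inj_on_def fun_eq_iff)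
  also have "\<dots> = (\<Sum>j<lsize (pkind (pieces D ! p)). M (b' p) j * N j (b p))"
  proof (rule sum.cong[OF refl])
    fix j
    have "ksign D (b(p := j)) p = ksign D b p" by (simp add: ksign_fun_upd)
    then show "?F (b(p := j)) = M (b' p) j * N j (b p)"
      using True ksign_mult_self[of D b p] by (simp add: factor_map_def algebra_simps)
  qed
  finally show ?thesis using True by simp
qed

lemma sum_factor_map_comp_other:
  assumes pq: "p \<noteq> q" and q: "q < length (pieces D)" and b: "b \<in> cbasis D" and b': "b' \<in> cbasis D"
  shows "(\<Sum>x\<in>cbasis D. factor_map D p M b' x * factor_map D q N x b) =
    factor_map D p M b' (b(q := b' q)) * factor_map D q N (b(q := b' q)) b"
proof -
  let ?t = "b(q := b' q)"
  have t: "?t \<in> cbasis D" using b b' q by (simp add: cbasis_fun_upd cbasis_bound)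
  have vanish: "factor_map D p M b' x * factor_map D q N x b = 0" if "x \<noteq> ?t" for x
  proof (cases "\<forall>r. r \<noteq> q \<longrightarrow> x r = b r")
    case True
    with that have "x q \<noteq> b' q" by (auto simp: fun_eq_iff split: if_splits)
    with pq show ?thesis by (auto simp: factor_map_def)
  qed (auto simp: factor_map_def)
  show ?thesis
    by (subst sum.remove[OF finite_cbasis t]) (simp add: vanish sum.neutral)
qed

lemma sum_factor_map_anticomm:
  assumes pq: "p \<noteq> q" and p: "p < length (pieces D)" and q: "q < length (pieces D)"
    and b: "b \<in> cbasis D" and b': "b' \<in> cbasis D"
    and M_odd: "\<And>i j. M i j \<noteq> 0 \<Longrightarrow> odd (lideg (pkind (pieces D ! p)) i - lideg (pkind (pieces D ! p)) j)"
    and N_odd: "\<And>i j. N i j \<noteq> 0 \<Longrightarrow> odd (lideg (pkind (pieces D ! q)) i - lideg (pkind (pieces D ! q)) j)"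
  shows "(\<Sum>x\<in>cbasis D. factor_map D p M b' x * factor_map D q N x b
                        + factor_map D q N b' x * factor_map D p M x b) = 0"
proof -
  let ?m = "M (b' p) (b p)" and ?n = "N (b' q) (b q)"
  let ?bq = "b(q := b' q)" and ?bp = "b(p := b' p)"
  have bq: "?bq p = b p" "?bq q = b' q" and bp: "?bp q = b q" "?bp p = b' p" using pq by simp_all
  have "factor_map D p M b' ?bq * factor_map D q N ?bq b + factor_map D q N b' ?bp * factor_map D p M ?bp b = 0"
  proof (cases "(\<forall>r. r \<noteq> p \<and> r \<noteq> q \<longrightarrow> b' r = b r) \<and> ?m \<noteq> 0 \<and> ?n \<noteq> 0")
    case True
    then have "\<forall>r. r \<noteq> p \<longrightarrow> b' r = ?bq r" "\<forall>r. r \<noteq> q \<longrightarrow> b' r = ?bp r" by auto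
    then have "factor_map D p M b' ?bq = ksign D ?bq p * ?m"
      and "factor_map D q N b' ?bp = ksign D ?bp q * ?n"
      by (simp_all only: factor_map_agree bq bp)
    moreover have "factor_map D q N ?bq b = ksign D b q * ?n"
      and "factor_map D p M ?bp b = ksign D b p * ?m"
      by (simp_all add: factor_map_agree)
    \<comment> \<open>changing an odd factor before the other one flips exactly one of the two Koszul signs\<close>
    moreover have "ksign D ?bq p = (if q < p then - ksign D b p else ksign D b p)"
      and "ksign D ?bp q = (if p < q then - ksign D b q else ksign D b q)"
      using True M_odd N_odd by (simp_all add: ksign_fun_upd)
    ultimately show ?thesis
      using pq by (cases "q < p") (simp_all add: algebra_simps)
  next
    case False
    then consider "?m = 0" | "?n = 0" | r where "r \<noteq> p" "r \<noteq> q" "b' r \<noteq> b r"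
      by blast
    then show ?thesis
    proof cases
      case 3
      then have "\<not> (\<forall>s. s \<noteq> p \<longrightarrow> b' s = ?bq s)" "\<not> (\<forall>s. s \<noteq> q \<longrightarrow> b' s = ?bp s)"
        by auto
      then show ?thesis by (simp add: factor_map_eq_0)
    qed (use pq in \<open>simp_all add: factor_map_eq_0\<close>)
  qed
  then show ?thesis
    using sum_factor_map_comp_other[OF pq q b b', of M N] sum_factor_map_comp_other[OF pq[symmetric] p b b', of N M]
    by (simp add: sum.distrib)
qed

definition admissible_htpy ::
    "nat \<Rightarrow> int \<Rightarrow> 'e diagram \<Rightarrow> ((nat \<Rightarrow> nat) \<Rightarrow> (nat \<Rightarrow> nat) \<Rightarrow> mpoly) \<Rightarrow> bool" where
  "admissible_htpy n deg D H \<longleftrightarrow>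
     (\<forall>b'\<in>cbasis D. \<forall>b\<in>cbasis D.
        H b' b \<in> diff_ring (nreg D)
      \<and> hom_deg (ideg D b + deg + 3 - ideg D b') (H b' b)
      \<and> (H b' b \<noteq> 0 \<longrightarrow> filt D b' \<ge> filt D b - int n))"

definition htpy_boundary ::
    "'e diagram \<Rightarrow> ((nat \<Rightarrow> nat) \<Rightarrow> (nat \<Rightarrow> nat) \<Rightarrow> mpoly) \<Rightarrow> (nat \<Rightarrow> nat) \<Rightarrow> (nat \<Rightarrow> nat) \<Rightarrow> mpoly"
  where "htpy_boundary D H b' b = (\<Sum>b''\<in>cbasis D. H b' b'' * dmat D b'' b + dmat D b' b'' * H b'' b)"

lemma homotopic_iff:
  "homotopic n deg D F G \<longleftrightarrow>
     (\<exists>H. admissible_htpy n deg D H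
        \<and> (\<forall>b'\<in>cbasis D. \<forall>b\<in>cbasis D. F b' b - G b' b = htpy_boundary D H b' b))"
  unfolding homotopic_def admissible_htpy_def htpy_boundary_def ..

lemma admissible_htpy_zero: "admissible_htpy n deg D (\<lambda>_ _. 0)"
  by (simp add: admissible_htpy_def diff_ring_zero hom_deg_zero)

lemma admissible_htpy_uminus:
  "admissible_htpy n deg D H \<Longrightarrow> admissible_htpy n deg D (\<lambda>b' b. - H b' b)"
  by (simp add: admissible_htpy_def diff_ring.neg hom_deg_uminus)

lemma admissible_htpy_add:
  assumes "admissible_htpy n deg D H" "admissible_htpy n deg D K"
  shows "admissible_htpy n deg D (\<lambda>b' b. H b' b + K b' b)"
  unfolding admissible_htpy_def
proof (intro ballI conjI impI)
  fix b' b assume b: "b' \<in> cbasis D" "b \<in> cbasis D"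
  with assms show "H b' b + K b' b \<in> diff_ring (nreg D)"
    and "hom_deg (ideg D b + deg + 3 - ideg D b') (H b' b + K b' b)"
    by (auto simp: admissible_htpy_def intro: diff_ring.add hom_deg_add)
  assume "H b' b + K b' b \<noteq> 0"
  then have "H b' b \<noteq> 0 \<or> K b' b \<noteq> 0" by auto
  with assms b show "filt D b - int n \<le> filt D b'" by (auto simp: admissible_htpy_def)
qed

lemma htpy_boundary_uminus: "htpy_boundary D (\<lambda>b' b. - H b' b) b' b = - htpy_boundary D H b' b"
  by (simp add: htpy_boundary_def sum_negf[symmetric])

lemma htpy_boundary_add:
  "htpy_boundary D (\<lambda>b' b. H b' b + K b' b) b' b = htpy_boundary D H b' b + htpy_boundary D K b' b"
  by (simp add: htpy_boundary_def sum.distrib[symmetric] algebra_simps)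

lemma homotopic_refl: "homotopic n deg D F F"
  unfolding homotopic_iff
  by (intro exI[of _ "\<lambda>_ _. 0"]) (simp add: admissible_htpy_zero htpy_boundary_def)

lemma homotopic_sym:
  assumes "homotopic n deg D F G" shows "homotopic n deg D G F"
proof -
  obtain H where H: "admissible_htpy n deg D H"
    and FG: "\<And>b' b. b' \<in> cbasis D \<Longrightarrow> b \<in> cbasis D \<Longrightarrow> F b' b - G b' b = htpy_boundary D H b' b"
    using assms unfolding homotopic_iff by blast
  have "G b' b - F b' b = htpy_boundary D (\<lambda>b' b. - H b' b) b' b"
    if "b' \<in> cbasis D" "b \<in> cbasis D" for b' b
    by (simp add: htpy_boundary_uminus flip: FG[OF that])
  with admissible_htpy_uminus[OF H] show ?thesis
    unfolding homotopic_iff by blast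
qed

lemma homotopic_trans:
  assumes "homotopic n deg D F G" "homotopic n deg D G K" shows "homotopic n deg D F K"
proof -
  obtain H where H: "admissible_htpy n deg D H"
    and FG: "\<And>b' b. b' \<in> cbasis D \<Longrightarrow> b \<in> cbasis D \<Longrightarrow> F b' b - G b' b = htpy_boundary D H b' b"
    using assms(1) unfolding homotopic_iff by blast
  obtain H' where H': "admissible_htpy n deg D H'"
    and GK: "\<And>b' b. b' \<in> cbasis D \<Longrightarrow> b \<in> cbasis D \<Longrightarrow> G b' b - K b' b = htpy_boundary D H' b' b"
    using assms(2) unfolding homotopic_iff by blast
  have "F b' b - K b' b = htpy_boundary D (\<lambda>b' b. H b' b + H' b' b) b' b"
    if "b' \<in> cbasis D" "b \<in> cbasis D" for b' b
    by (simp add: htpy_boundary_add flip: FG[OF that] GK[OF that])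
  with admissible_htpy_add[OF H H'] show ?thesis
    unfolding homotopic_iff by blast
qed

lemma htpy_boundary_factor_htpy:
  assumes p: "p < length (pieces D)" and b: "b \<in> cbasis D" and b': "b' \<in> cbasis D"
  shows "htpy_boundary D (factor_map D p (local_htpy (pieces D ! p))) b' b
         = (if b' = b then piece_shift (pieces D ! p) else 0)"
proof -
  let ?H = "factor_map D p (local_htpy (pieces D ! p))"
  let ?d = "\<lambda>q. factor_map D q (ld (pieces D ! q))"
  have "htpy_boundary D ?H b' b
      = (\<Sum>q<length (pieces D). \<Sum>x\<in>cbasis D. ?H b' x * ?d q x b + ?d q b' x * ?H x b)"
    unfolding htpy_boundary_def dmat_eq_sum_factor_map
    by (simp add: sum_distrib_left sum_distrib_right sum.distrib sum.swap[of _ "cbasis D"])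
  also have "\<dots> = (\<Sum>q<length (pieces D). if q = p then (if b' = b then piece_shift (pieces D ! p) else 0) else 0)"
  proof (rule sum.cong[OF refl])
    fix q assume q: "q \<in> {..<length (pieces D)}"
    show "(\<Sum>x\<in>cbasis D. ?H b' x * ?d q x b + ?d q b' x * ?H x b)
          = (if q = p then (if b' = b then piece_shift (pieces D ! p) else 0) else 0)"
    proof (cases "q = p")
      case True
      let ?hl = "local_htpy (pieces D ! p)" and ?ld = "ld (pieces D ! p)"
      have "(\<Sum>x\<in>cbasis D. ?H b' x * ?d q x b + ?d q b' x * ?H x b)
          = (if \<forall>r. r \<noteq> p \<longrightarrow> b' r = b r
             then \<Sum>j<lsize (pkind (pieces D ! p)). ?hl (b' p) j * ?ld j (b p) + ?ld (b' p) j * ?hl j (b p)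
             else 0)"
        unfolding True sum.distrib sum_factor_map_comp[OF p b b'] by (auto simp: sum.distrib)
      also have "\<dots> = (if b' = b then piece_shift (pieces D ! p) else 0)"
        using p b b' by (auto simp: local_htpy_boundary cbasis_bound fun_eq_iff)
      finally show ?thesis using True by simp
    next
      case False
      from q have "q < length (pieces D)" by simp
      from sum_factor_map_anticomm[OF _ p this b b' local_htpy_nonzero_imp_odd ld_nonzero_imp_odd] False
      show ?thesis by simp
    qed
  qed
  also have "\<dots> = (if b' = b then piece_shift (pieces D ! p) else 0)"
    using p by simp
  finally show ?thesis .
qed

lemma admissible_factor_htpy:
  assumes wf: "wf_diagram D" and p: "p < length (pieces D)"
  shows "admissible_htpy 1 (-2) D (factor_map D p (local_htpy (pieces D ! p)))"
  unfolding admissible_htpy_def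
proof (intro ballI)
  fix b' b
  let ?h = "local_htpy (pieces D ! p) (b' p) (b p)" and ?t = "pkind (pieces D ! p)"
  show "factor_map D p (local_htpy (pieces D ! p)) b' b \<in> diff_ring (nreg D)
     \<and> hom_deg (ideg D b + - 2 + 3 - ideg D b') (factor_map D p (local_htpy (pieces D ! p)) b' b)
     \<and> (factor_map D p (local_htpy (pieces D ! p)) b' b \<noteq> 0 \<longrightarrow> filt D b - int 1 \<le> filt D b')"
  proof (cases "\<forall>r. r \<noteq> p \<longrightarrow> b' r = b r")
    case True
    then have b': "b' = b(p := b' p)" by (auto simp: fun_eq_iff)
    have deg: "ideg D b + -2 + 3 - ideg D b' = lideg ?t (b p) + 1 - lideg ?t (b' p)"
      and filt: "filt D b' = filt D b + lfilt ?t (b' p) - lfilt ?t (b p)"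
      by (subst b'; simp add: ideg_fun_upd filt_fun_upd p)+
    show ?thesis unfolding factor_map_agree[OF True] deg
    proof (intro conjI impI)
      show "ksign D b p * ?h \<in> diff_ring (nreg D)"
        using wf p by (auto simp: ksign_def preg_bound
                            intro!: diff_ring.mult diff_ring.neg diff_ring.one local_htpy_in_diff_ring)
      show "hom_deg (lideg ?t (b p) + 1 - lideg ?t (b' p)) (ksign D b p * ?h)"
        using local_htpy_hom_deg by (simp add: ksign_def hom_deg_uminus)
      assume "ksign D b p * ?h \<noteq> 0"
      then show "filt D b - int 1 \<le> filt D b'"
        using local_htpy_filt[of "pieces D ! p" "b' p" "b p"] filt by simp
    qed
  qed (simp add: factor_map_eq_0 diff_ring_zero hom_deg_zero)
qed

lemma homotopic_mult_mat_piece_shift: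
  assumes "wf_diagram D" "p < length (pieces D)" "a - a' = piece_shift (pieces D ! p)"
  shows "homotopic 1 (-2) D (mult_mat a) (mult_mat a')"
  unfolding homotopic_iff
proof (intro exI conjI ballI)
  show "admissible_htpy 1 (-2) D (factor_map D p (local_htpy (pieces D ! p)))"
    using assms(1,2) by (rule admissible_factor_htpy)
  fix b' b assume "b' \<in> cbasis D" "b \<in> cbasis D"
  with assms(2,3) show "mult_mat a b' b - mult_mat a' b' b
      = htpy_boundary D (factor_map D p (local_htpy (pieces D ! p))) b' b"
    by (simp add: htpy_boundary_factor_htpy mult_mat_def)
qed

lemma x_edge_diff_next_edge:
  assumes wf: "wf_diagram D" and "next_edge D e f"
  obtains p where "p < length (pieces D)"
    and "x_edge D e - x_edge D f = piece_shift (pieces D ! p)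
         \<or> x_edge D f - x_edge D e = piece_shift (pieces D ! p)"
proof -
  obtain p k where e: "e \<in> edges D" and f: "f \<in> edges D" and p: "p < length (pieces D)"
    and "k < 4" and te: "tgt D e = Port p k"
    and sf: "src D f = Port p (partner (pkind (pieces D ! p)) k)"
    using assms(2) unfolding next_edge_def by blast
  obtain t r0 r1 r2 r3 where pc: "pieces D ! p = Piece t r0 r1 r2 r3" by (cases "pieces D ! p")
  from wf e te f sf have xe: "x_edge D e = Var (preg (pieces D ! p) k) - Var (preg (pieces D ! p) (Suc k))"
    and xf: "x_edge D f = Var (preg (pieces D ! p) (Suc (partner (pkind (pieces D ! p)) k)))
                      - Var (preg (pieces D ! p) (partner (pkind (pieces D ! p)) k))"
    unfolding wf_diagram_def x_edge_def by auto
  have "k \<in> {0, 1, 2, 3}" using \<open>k < 4\<close> by auto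
  then have "x_edge D e - x_edge D f = piece_shift (pieces D ! p)
         \<or> x_edge D f - x_edge D e = piece_shift (pieces D ! p)"
    unfolding xe xf pc by (cases t) (auto simp: partner_def piece_shift_def algebra_simps)
  with p show thesis by (rule that)
qed

lemma homotopic_mult_mat_next_edge:
  assumes "wf_diagram D" "next_edge D e f"
  shows "homotopic 1 (-2) D (mult_mat (x_edge D e)) (mult_mat (x_edge D f))"
  using x_edge_diff_next_edge[OF assms]
  by (metis assms(1) homotopic_mult_mat_piece_shift homotopic_sym)

theorem lemma4p2:
  fixes D :: "'e diagram" and e f :: 'e
  assumes "wf_diagram D"
    and "e \<in> edges D" and "f \<in> edges D"
    and "same_strand D e f"
  shows "homotopic 1 (-2) D (mult_mat (x_edge D e)) (mult_mat (x_edge D f))"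
  using assms(4) unfolding same_strand_def
proof (induction rule: rtranclp_induct)
  case base
  show ?case by (rule homotopic_refl)
next
  case (step g h)
  then have "homotopic 1 (-2) D (mult_mat (x_edge D g)) (mult_mat (x_edge D h))"
    using homotopic_mult_mat_next_edge[OF assms(1)] homotopic_sym by blast
  with step.IH show ?case by (rule homotopic_trans)
qed

end
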